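(* Let $p\in\mathbb{N}$ and let $B_w$ be the weighted backward shift on $\ell^2$ with weights $w_k=\left(\frac{k+2}{k+1}\right)^{1/(2p)}$, $k\in\mathbb{N}$. Then $B_w$ is not $p$-frequently hypercyclic on $\ell^2$ (norm topology), but $B_w$ is $q$-frequently hypercyclic on $\ell^2$ for every $q\ge p+1$.
   Context: The weighted backward shift is $B_w(e_n)=w_ne_{n-1}$ for $n\ge1$, $e_0=0$. An operator $T$ on a separable topological vector space $X$ is $q$-frequently hypercyclic ($q\in\mathbb{N}$) if there is $x\in X$ such that for every nonempty open $U$ the set $\{n\in\mathbb{N}:T^nx\in U\}$ has positive $q$-lower density, where $q\text{-}\underline{\mathrm{dens}}(A)=\liminf_{N\to\infty}\frac{\mathrm{card}\{n\in A:n\le N^q\}}{N}$. *)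

theory Defs
  imports "HOL-Analysis.Analysis"
begin

definition l2 :: "(nat \<Rightarrow> real) set" where
  "l2 = {x. summable (\<lambda>n. (x n)\<^sup>2)}"

definition l2norm :: "(nat \<Rightarrow> real) \<Rightarrow> real" where
  "l2norm x = sqrt (\<Sum>n. (x n)\<^sup>2)"

definition l2_open :: "(nat \<Rightarrow> real) set \<Rightarrow> bool" where
  "l2_open U \<longleftrightarrow> U \<subseteq> l2 \<and>
     (\<forall>x\<in>U. \<exists>e>0. \<forall>y\<in>l2. l2norm (\<lambda>n. y n - x n) < e \<longrightarrow> y \<in> U)"

text \<open>Weighted backward shift: B_w(e_n) = w_n e_(n-1) for n \<ge> 1, B_w(e_0) = 0,
  i.e. (B_w x)_m = w_(m+1) x_(m+1).\<close>

definition bshift :: "(nat \<Rightarrow> real) \<Rightarrow> (nat \<Rightarrow> real) \<Rightarrow> (nat \<Rightarrow> real)" where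
  "bshift w x = (\<lambda>m. w (Suc m) * x (Suc m))"

definition q_lower_dens :: "nat \<Rightarrow> nat set \<Rightarrow> ereal" where
  "q_lower_dens q A =
     liminf (\<lambda>N::nat. ereal (real (card {n\<in>A. n \<le> N ^ q}) / real N))"

definition q_freq_hypercyclic_l2 :: "nat \<Rightarrow> ((nat \<Rightarrow> real) \<Rightarrow> (nat \<Rightarrow> real)) \<Rightarrow> bool" where
  "q_freq_hypercyclic_l2 q T \<longleftrightarrow>
     (\<exists>x\<in>l2. \<forall>U. l2_open U \<and> U \<noteq> {} \<longrightarrow> q_lower_dens q {n. (T ^^ n) x \<in> U} > 0)"

end

theory Submission
  imports Defs
begin

text \<open>
  The weights telescope: w 1 * ... * w n = W n / W 0 with W n = ((n + 2) / 2)^(1/(2p)), so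
  (B^n x) m = W (m + n) / W m * x (m + n).

  If B^n x comes close to e_0 for a set of times n of positive p-lower density, the k-th such
  time is at most (D (k + 1))^p; there W n / W 0 is at most of order (k + 1)^(1/2), which
  forces x n^2 to be at least of order 1/k.  Summing over k contradicts x \<in> l^2.

  For q \<ge> p + 1 a q-frequently hypercyclic vector is assembled from blocks.  All pairs of
  a finitely supported rational target and a precision are enumerated.  For every large N the
  target numbered by the dyadic index of N, divided by the weight products, is written at the
  positions N^(p+1) + i, so that B^(N^(p+1)) x reproduces it.  The blocks of larger N' are
  lifted by the weights only by a factor (i + 2)^(1/p), which the gap
  N'^(p+1) - N^(p+1) \<ge> (N' - N) N'^p beats, leaving a tail of order N^(-1/(4p)).  The times
  N^(p+1) with N in a residue class have positive q-lower density exactly when q \<ge> p + 1.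
\<close>

section \<open>Sequences in l^2\<close>

lemma summable_square_add:
  fixes f g :: "nat \<Rightarrow> real"
  assumes "summable (\<lambda>n. (f n)\<^sup>2)" and "summable (\<lambda>n. (g n)\<^sup>2)"
  shows "summable (\<lambda>n. (f n + g n)\<^sup>2)"
proof (rule summable_comparison_test')
  show "summable (\<lambda>n. 2 * (f n)\<^sup>2 + 2 * (g n)\<^sup>2)"
    using assms by (intro summable_add summable_mult)
  show "norm ((f n + g n)\<^sup>2) \<le> 2 * (f n)\<^sup>2 + 2 * (g n)\<^sup>2" for n
    using sum_squares_bound[of "f n" "g n"] sum_squares_bound[of "- f n" "g n"]
    by (simp add: power2_sum)
qed

lemma L2_set_lessThan_tendsto_l2norm:
  assumes "summable (\<lambda>n. (f n)\<^sup>2)"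
  shows "(\<lambda>K. L2_set f {..<K}) \<longlonglongrightarrow> l2norm f"
  unfolding L2_set_def l2norm_def by (intro tendsto_real_sqrt summable_LIMSEQ assms)

lemma l2norm_add_le:
  assumes "summable (\<lambda>n. (f n)\<^sup>2)" and "summable (\<lambda>n. (g n)\<^sup>2)"
  shows "l2norm (\<lambda>n. f n + g n) \<le> l2norm f + l2norm g"
  using L2_set_lessThan_tendsto_l2norm[OF summable_square_add[OF assms]]
    tendsto_add[OF L2_set_lessThan_tendsto_l2norm[OF assms(1)]
      L2_set_lessThan_tendsto_l2norm[OF assms(2)]]
  by (rule LIMSEQ_le) (use L2_set_triangle_ineq in blast)

lemma l2_summable_diff:
  assumes "a \<in> l2" and "b \<in> l2"
  shows "summable (\<lambda>n. (a n - b n)\<^sup>2)"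
  using summable_square_add[of a "\<lambda>n. - b n"] assms by (simp add: l2_def)

lemma l2norm_diff_triangle:
  assumes "a \<in> l2" and "b \<in> l2" and "c \<in> l2"
  shows "l2norm (\<lambda>n. a n - c n) \<le> l2norm (\<lambda>n. a n - b n) + l2norm (\<lambda>n. b n - c n)"
  using l2norm_add_le[OF l2_summable_diff[OF assms(1,2)] l2_summable_diff[OF assms(2,3)]] by simp

lemma abs_le_l2norm:
  assumes "summable (\<lambda>n. (f n)\<^sup>2)"
  shows "\<bar>f i\<bar> \<le> l2norm f"
proof -
  have "(\<Sum>n\<in>{i}. (f n)\<^sup>2) \<le> (\<Sum>n. (f n)\<^sup>2)"
    by (rule sum_le_suminf[OF assms]) auto
  hence "sqrt ((f i)\<^sup>2) \<le> l2norm f"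
    unfolding l2norm_def by (intro real_sqrt_le_mono) simp
  thus ?thesis by simp
qed

lemma l2I_finite_support:
  assumes "\<And>n. n \<ge> K \<Longrightarrow> f n = 0"
  shows "f \<in> l2"
proof -
  have "summable (\<lambda>n. (f (n + K))\<^sup>2)" using assms by simp
  thus ?thesis unfolding l2_def using summable_iff_shift[of "\<lambda>n. (f n)\<^sup>2" K] by simp
qed

lemma l2_open_coordinate_ball: "l2_open {v \<in> l2. \<bar>v i - c\<bar> < r}"
  unfolding l2_open_def
proof (intro conjI ballI)
  fix v assume v: "v \<in> {v \<in> l2. \<bar>v i - c\<bar> < r}"
  show "\<exists>e>0. \<forall>y\<in>l2. l2norm (\<lambda>n. y n - v n) < e \<longrightarrow> y \<in> {v \<in> l2. \<bar>v i - c\<bar> < r}"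
  proof (intro exI[of _ "r - \<bar>v i - c\<bar>"] conjI ballI impI)
    show "0 < r - \<bar>v i - c\<bar>" using v by simp
    fix y assume y: "y \<in> l2" and "l2norm (\<lambda>n. y n - v n) < r - \<bar>v i - c\<bar>"
    moreover have "\<bar>y i - v i\<bar> \<le> l2norm (\<lambda>n. y n - v n)"
      using abs_le_l2norm[OF l2_summable_diff[OF y]] v by simp
    ultimately show "y \<in> {v \<in> l2. \<bar>v i - c\<bar> < r}" by simp
  qed
qed auto

lemma l2_rat_list_approx:
  assumes z: "z \<in> l2" and e: "e > 0"
  obtains ys :: "rat list"
  where "l2norm (\<lambda>n. (if n < length ys then of_rat (ys ! n) else 0) - z n) < e"
proof -
  have sz: "summable (\<lambda>n. (z n)\<^sup>2)" using z by (simp add: l2_def)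
  obtain K where "norm (\<Sum>n. (z (n + K))\<^sup>2) < e\<^sup>2 / 2"
    using suminf_exist_split[OF _ sz, of "e\<^sup>2/2"] e by auto
  hence K: "(\<Sum>n. (z (n + K))\<^sup>2) < e\<^sup>2 / 2" by (simp add: abs_less_iff)
  define d where "d = e / sqrt (2 * (real K + 1))"
  have "\<exists>r::rat. \<bar>of_rat r - z i\<bar> < d" for i
    using of_rat_dense[of "z i - d" "z i + d"] e by (auto simp: d_def abs_diff_less_iff)
  then obtain r :: "nat \<Rightarrow> rat" where r: "\<And>i. \<bar>of_rat (r i) - z i\<bar> < d" by metis
  define ys where "ys = map r [0..<K]"
  define y where "y n = (if n < length ys then of_rat (ys ! n) else 0) - z n" for n
  have y_tail: "y (n + K) = - z (n + K)" for n by (simp add: y_def ys_def)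
  have sy: "summable (\<lambda>n. (y n)\<^sup>2)"
    using summable_iff_shift[of "\<lambda>n. (z n)\<^sup>2" K] summable_iff_shift[of "\<lambda>n. (y n)\<^sup>2" K] sz
    by (simp add: y_tail)
  have "(\<Sum>i<K. (y i)\<^sup>2) \<le> (\<Sum>i<K. d\<^sup>2)"
  proof (rule sum_mono)
    fix i assume "i \<in> {..<K}"
    hence "\<bar>y i\<bar> \<le> d" using r[of i] by (simp add: y_def ys_def)
    thus "(y i)\<^sup>2 \<le> d\<^sup>2" by (metis abs_ge_zero power2_abs power_mono)
  qed
  also have "(\<Sum>i<K. d\<^sup>2) = real K / (real K + 1) * (e\<^sup>2 / 2)"
    by (simp add: d_def power_divide)
  also have "\<dots> \<le> e\<^sup>2 / 2" by (rule mult_left_le_one_le) auto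
  finally have "(\<Sum>n. (y n)\<^sup>2) < e\<^sup>2"
    using suminf_split_initial_segment[OF sy, of K] K by (simp add: y_tail)
  hence "l2norm y < e"
    unfolding l2norm_def using e real_sqrt_less_mono[of _ "e\<^sup>2"] by fastforce
  thus ?thesis using that unfolding y_def by blast
qed

lemma bshift_in_l2:
  assumes w: "\<And>k. \<bar>w k\<bar> \<le> c" and x: "x \<in> l2"
  shows "bshift w x \<in> l2"
proof -
  have "summable (\<lambda>m. (x (Suc m))\<^sup>2)"
    using x summable_iff_shift[of "\<lambda>n. (x n)\<^sup>2" 1] by (simp add: l2_def)
  hence "summable (\<lambda>m. c\<^sup>2 * (x (Suc m))\<^sup>2)" by (rule summable_mult)
  moreover have "norm ((bshift w x m)\<^sup>2) \<le> c\<^sup>2 * (x (Suc m))\<^sup>2" for m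
    using power_mono[OF w[of "Suc m"] abs_ge_zero, of 2]
    by (simp add: bshift_def power_mult_distrib mult_right_mono)
  ultimately show ?thesis
    unfolding l2_def mem_Collect_eq by (rule summable_comparison_test'[where N=0])
qed

lemma bshift_iterate_in_l2:
  "(\<And>k. \<bar>w k\<bar> \<le> c) \<Longrightarrow> x \<in> l2 \<Longrightarrow> (bshift w ^^ n) x \<in> l2"
  by (induction n) (auto intro: bshift_in_l2)

lemma bshift_iterate_ratio:
  fixes W :: "nat \<Rightarrow> real"
  assumes w: "\<And>m. w (Suc m) = W (Suc m) / W m" and W: "\<And>m. W m \<noteq> 0"
  shows "(bshift w ^^ n) x m = W (m + n) / W m * x (m + n)"
proof (induction n arbitrary: m)
  case (Suc n)
  have "(bshift w ^^ Suc n) x m = w (Suc m) * (bshift w ^^ n) x (Suc m)"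
    by (simp add: bshift_def)
  also have "\<dots> = W (m + Suc n) / W m * x (m + Suc n)"
    using Suc W[of "Suc m"] by (simp add: w)
  finally show ?case .
qed (simp add: W)

section \<open>Lower densities\<close>

lemma q_lower_dens_positiveI:
  assumes "c > 0"
    and "eventually (\<lambda>M. c \<le> real (card {n\<in>A. n \<le> M ^ q}) / real M) sequentially"
  shows "q_lower_dens q A > 0"
proof -
  have "ereal c \<le> q_lower_dens q A"
    unfolding q_lower_dens_def
    by (rule Liminf_bounded) (use assms(2) in \<open>auto elim: eventually_mono\<close>)
  thus ?thesis using assms(1) by (metis ereal_less(2) order_less_le_trans)
qed

lemma q_lower_dens_positiveD:
  assumes "q_lower_dens q A > 0"
  obtains z where "z > 0"
    and "eventually (\<lambda>M. z * real M < real (card {n\<in>A. n \<le> M ^ q})) sequentially"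
proof -
  obtain z where z: "0 < ereal z" "ereal z < q_lower_dens q A"
    using ereal_dense2[OF assms] by blast
  have "eventually (\<lambda>M. z < real (card {n\<in>A. n \<le> M ^ q}) / real M) sequentially"
    using less_LiminfD[OF z(2)[unfolded q_lower_dens_def]] by simp
  hence "eventually (\<lambda>M. z * real M < real (card {n\<in>A. n \<le> M ^ q})) sequentially"
    using eventually_ge_at_top[of "1::nat"]
    by eventually_elim (simp add: field_simps)
  thus ?thesis using that z(1) by simp
qed

lemma enumerate_le_if_less_card:
  fixes A :: "nat set"
  assumes "infinite A" and "k < card {n\<in>A. n \<le> b}"
  shows "enumerate A k \<le> b"
proof (rule ccontr)
  assume "\<not> enumerate A k \<le> b"
  have "{n\<in>A. n \<le> b} \<subseteq> enumerate A ` {..<k}"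
  proof clarify
    fix n assume "n \<in> A" "n \<le> b"
    then obtain i where i: "enumerate A i = n" using enumerate_Ex[OF assms(1)] by blast
    hence "i < k" using \<open>n \<le> b\<close> \<open>\<not> enumerate A k \<le> b\<close> assms(1)
      by (metis enumerate_mono_le_iff le_trans not_le)
    thus "n \<in> enumerate A ` {..<k}" using i by blast
  qed
  hence "card {n\<in>A. n \<le> b} \<le> card (enumerate A ` {..<k})"
    by (intro card_mono) auto
  also have "\<dots> \<le> k"
    using card_image_le[of "{..<k}" "enumerate A"] by simp
  finally have "card {n\<in>A. n \<le> b} \<le> k" .
  with assms(2) show False by simp
qed

lemma infinite_if_q_lower_dens_pos:
  assumes "q_lower_dens q A > 0"
  shows "infinite A"
proof
  assume "finite A"
  obtain z M0 where z: "z > 0"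
    and M0: "\<And>M. M \<ge> M0 \<Longrightarrow> z * real M < real (card {n\<in>A. n \<le> M ^ q})"
    using q_lower_dens_positiveD[OF assms] unfolding eventually_sequentially by metis
  define M where "M = max M0 (nat \<lceil>real (card A) / z\<rceil>)"
  have "card {n\<in>A. n \<le> M ^ q} \<le> card A" using \<open>finite A\<close> by (intro card_mono) auto
  moreover have "real (card A) / z \<le> real M"
    using real_nat_ceiling_ge[of "real (card A) / z"] by (simp add: M_def of_nat_max)
  ultimately show False using M0[of M] z by (simp add: M_def field_simps)
qed

lemma enumerate_bound_if_q_lower_dens_pos:
  assumes "q_lower_dens q A > 0"
  obtains D :: real and M :: "nat \<Rightarrow> nat"
  where "D > 0" and "\<And>k. enumerate A k \<le> M k ^ q"
    and "\<And>k. 1 \<le> M k" and "\<And>k. real (M k) \<le> D * real (Suc k)"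
proof -
  obtain z M0 where z: "z > 0"
    and M0: "\<And>M. M \<ge> M0 \<Longrightarrow> z * real M < real (card {n\<in>A. n \<le> M ^ q})"
    using q_lower_dens_positiveD[OF assms] unfolding eventually_sequentially by metis
  have inf: "infinite A" by (rule infinite_if_q_lower_dens_pos[OF assms])
  define Mk where "Mk k = M0 + nat \<lceil>real k / z\<rceil> + 1" for k
  have enum: "enumerate A k \<le> Mk k ^ q" for k
  proof (rule enumerate_le_if_less_card[OF inf])
    have "real k / z \<le> real (Mk k)"
      using real_nat_ceiling_ge[of "real k / z"] by (simp add: Mk_def)
    hence "real k \<le> z * real (Mk k)" using z by (simp add: field_simps)
    also have "\<dots> < real (card {n\<in>A. n \<le> Mk k ^ q})" by (rule M0) (simp add: Mk_def)
    finally show "k < card {n\<in>A. n \<le> Mk k ^ q}" by simp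
  qed
  have bound: "real (Mk k) \<le> (real M0 + 1 / z + 2) * real (Suc k)" for k
  proof -
    have "real (nat \<lceil>real k / z\<rceil>) \<le> real k / z + 1"
      using of_int_ceiling_le_add_one[of "real k / z"] z by (simp add: of_nat_nat)
    moreover have "(real M0 + 1 / z + 2) * real (Suc k)
        = real M0 * real k + real M0 + real k / z + 1 / z + 2 * real k + 2"
      using z by (simp add: field_simps)
    moreover have "0 \<le> real M0 * real k" "0 < 1 / z" using z by simp_all
    moreover have "real (Mk k) = real M0 + real (nat \<lceil>real k / z\<rceil>) + 1"
      by (simp add: Mk_def)
    ultimately show ?thesis by linarith
  qed
  have "real M0 + 1 / z + 2 > 0"
    using divide_pos_pos[OF zero_less_one z] of_nat_0_le_iff[of M0] by linarith
  from that[OF this enum _ bound] show ?thesis by (simp add: Mk_def)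
qed

lemma summable_comp_inj_nonneg:
  fixes f :: "nat \<Rightarrow> real"
  assumes f: "summable f" "\<And>n. 0 \<le> f n" and g: "inj g"
  shows "summable (\<lambda>k. f (g k))"
proof (rule summableI_nonneg_bounded)
  fix K
  have "(\<Sum>k<K. f (g k)) = (\<Sum>n\<in>g ` {..<K}. f n)"
    using g by (simp add: sum.reindex inj_on_subset)
  also have "\<dots> \<le> suminf f" by (rule sum_le_suminf) (use f in auto)
  finally show "(\<Sum>k<K. f (g k)) \<le> suminf f" .
qed (use f in auto)

lemma eventually_card_residue_class_ge:
  fixes m h R :: nat
  assumes m: "0 < m" and h: "h < m"
  shows "eventually (\<lambda>M. 1 / (2 * real m)
           \<le> real (card {N. R \<le> N \<and> N \<le> M \<and> N mod m = h}) / real M) sequentially"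
  unfolding eventually_sequentially
proof (intro exI allI impI)
  fix M assume M: "2 * m * (R + 1) \<le> M"
  have sub: "(\<lambda>r. m * r + h) ` {R..<M div m} \<subseteq> {N. R \<le> N \<and> N \<le> M \<and> N mod m = h}"
  proof clarify
    fix r assume r: "r \<in> {R..<M div m}"
    have "m * r + h < m * Suc r" using h by simp
    also have "m * Suc r \<le> M"
      using r m by (metis Suc_leI atLeastLessThan_iff less_eq_div_iff_mult_less_eq mult.commute)
    finally have "m * r + h \<le> M" by simp
    moreover have "R \<le> m * r + h"
      using r m le_trans[of R r "m * r"] by (simp add: trans_le_add1)
    ultimately show "R \<le> m * r + h \<and> m * r + h \<le> M \<and> (m * r + h) mod m = h"
      using h by simp
  qed
  have "M div m - R = card ((\<lambda>r. m * r + h) ` {R..<M div m})"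
    using m by (simp add: card_image inj_on_def)
  also have "\<dots> \<le> card {N. R \<le> N \<and> N \<le> M \<and> N mod m = h}"
    by (rule card_mono[OF _ sub]) simp
  finally have card: "M div m - R \<le> card {N. R \<le> N \<and> N \<le> M \<and> N mod m = h}" .
  have "M < m * (M div m) + m"
    using m by (metis add_less_cancel_left div_mult_mod_eq mod_less_divisor mult.commute)
  hence "m * R + m * R + m < m * (M div m)" using M by (simp add: algebra_simps)
  hence "M \<le> 2 * m * (M div m - R)"
    using \<open>M < m * (M div m) + m\<close> by (simp add: diff_mult_distrib2)
  also have "\<dots> \<le> 2 * m * card {N. R \<le> N \<and> N \<le> M \<and> N mod m = h}"
    using card by simp
  finally have "real M \<le> 2 * real m * real (card {N. R \<le> N \<and> N \<le> M \<and> N mod m = h})"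
    by (metis of_nat_le_iff of_nat_mult of_nat_numeral)
  moreover have "0 < 2 * m * (R + 1)" using m by simp
  hence "0 < M" using M by linarith
  ultimately show "1 / (2 * real m) \<le> real (card {N. R \<le> N \<and> N \<le> M \<and> N mod m = h}) / real M"
    using m by (simp add: divide_le_eq le_divide_eq mult.commute)
qed

lemma q_lower_dens_pos_if_powers_mem:
  fixes m h R r q :: nat
  assumes m: "0 < m" "h < m" and r: "1 \<le> r" "r \<le> q"
    and A: "\<And>N. R \<le> N \<Longrightarrow> N mod m = h \<Longrightarrow> N ^ r \<in> A"
  shows "q_lower_dens q A > 0"
proof (rule q_lower_dens_positiveI)
  show "0 < 1 / (2 * real m)" using m by simp
  have card: "card {N. R \<le> N \<and> N \<le> M \<and> N mod m = h} \<le> card {n\<in>A. n \<le> M ^ q}"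
    if "1 \<le> M" for M
  proof -
    let ?S = "{N. R \<le> N \<and> N \<le> M \<and> N mod m = h}"
    have "inj_on (\<lambda>N. N ^ r) ?S"
      using r by (intro inj_onI) (simp add: power_eq_iff_eq_base)
    hence "card ?S = card ((\<lambda>N. N ^ r) ` ?S)" by (simp add: card_image)
    also have "\<dots> \<le> card {n\<in>A. n \<le> M ^ q}"
    proof (rule card_mono)
      show "(\<lambda>N. N ^ r) ` ?S \<subseteq> {n\<in>A. n \<le> M ^ q}"
      proof (rule image_subsetI)
        fix N assume N: "N \<in> ?S"
        have "N ^ r \<le> M ^ r" using N by (intro power_mono) simp_all
        also have "\<dots> \<le> M ^ q" using that r by (intro power_increasing) simp_all
        finally show "N ^ r \<in> {n\<in>A. n \<le> M ^ q}" using A N by simp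
      qed
    qed simp
    finally show ?thesis .
  qed
  show "eventually (\<lambda>M. 1 / (2 * real m) \<le> real (card {n\<in>A. n \<le> M ^ q}) / real M) sequentially"
    using eventually_card_residue_class_ge[OF m, of R] eventually_ge_at_top[of "1::nat"]
  proof eventually_elim
    case (elim M)
    have "real (card {N. R \<le> N \<and> N \<le> M \<and> N mod m = h}) / real M
        \<le> real (card {n\<in>A. n \<le> M ^ q}) / real M"
      using card[OF elim(2)] by (intro divide_right_mono) simp_all
    with elim(1) show ?case by linarith
  qed
qed

text \<open>For N > 0 this is the exponent of 2 in N; it is j on the whole residue class 2^j
  modulo 2^(j+1).\<close>

definition dyadic_index :: "nat \<Rightarrow> nat" where
  "dyadic_index N = (LEAST j. N mod 2 ^ Suc j = 2 ^ j)"

lemma dyadic_index_eq: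
  assumes "N mod 2 ^ Suc j = 2 ^ j"
  shows "dyadic_index N = j"
proof -
  have less: "\<not> (N mod 2 ^ Suc a = 2 ^ a \<and> N mod 2 ^ Suc b = 2 ^ b)" if "a < b" for a b
  proof
    assume ab: "N mod 2 ^ Suc a = 2 ^ a \<and> N mod 2 ^ Suc b = 2 ^ b"
    have "N mod 2 ^ Suc b mod 2 ^ Suc a = N mod 2 ^ Suc a"
      using \<open>a < b\<close> by (intro mod_mod_cancel le_imp_power_dvd) simp
    moreover have "(2::nat) ^ Suc a dvd 2 ^ b" using \<open>a < b\<close> by (intro le_imp_power_dvd) simp
    ultimately show False using ab by simp
  qed
  show ?thesis
    unfolding dyadic_index_def
    by (rule Least_equality[where P = "\<lambda>j. N mod 2 ^ Suc j = 2 ^ j", OF assms])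
      (use less assms in \<open>metis not_le\<close>)
qed

lemma power_add_less_power_Suc:
  fixes N q :: nat
  assumes "2 \<le> q"
  shows "N ^ q + N < (N + 1) ^ q"
  using assms
proof (induction q rule: dec_induct)
  case base
  show ?case by (simp add: power2_eq_square)
next
  case (step q)
  have "N ^ Suc q + N \<le> (N + 1) * (N ^ q + N)" by (simp add: algebra_simps)
  also have "\<dots> < (N + 1) * (N + 1) ^ q" by (rule mult_strict_left_mono[OF step.IH]) simp
  finally show ?case by simp
qed

lemma power_add_less_power:
  fixes N N' q :: nat
  assumes "N < N'" and "2 \<le> q"
  shows "N ^ q + N < N' ^ q"
  using power_add_less_power_Suc[OF assms(2), of N] power_mono[of "N + 1" N' q] assms(1)
  by simp

lemma eventually_less_real_powr:
  fixes c s :: real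
  assumes "s > 0"
  shows "eventually (\<lambda>N. c < real N powr s) sequentially"
  unfolding eventually_sequentially
proof (intro exI allI impI)
  define c' where "c' = max c 1"
  fix N assume "Suc (nat \<lceil>c' powr (1 / s)\<rceil>) \<le> N"
  hence "c' powr (1 / s) < real N" by linarith
  hence "(c' powr (1 / s)) powr s < real N powr s"
    using assms by (intro powr_less_mono2) auto
  also have "(c' powr (1 / s)) powr s = c'"
    using assms by (simp add: c'_def powr_powr)
  finally show "c < real N powr s" by (simp add: c'_def)
qed

lemma sum_shift_le_sum_lessThan:
  fixes h :: "nat \<Rightarrow> real"
  assumes G: "G \<subseteq> {N<..B}" and h: "\<And>x. 0 \<le> h x"
  shows "(\<Sum>N'\<in>G. h (N' - N)) \<le> (\<Sum>t<B. h (Suc t))"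
proof -
  have "(\<Sum>N'\<in>G. h (N' - N)) \<le> (\<Sum>N'\<in>{N<..N + B}. h (N' - N))"
    by (rule sum_mono2) (use G h in auto)
  also have "\<dots> = (\<Sum>t<B. h (Suc t))"
    by (rule sum.reindex_bij_witness[where j="\<lambda>N'. N' - N - 1" and i="\<lambda>t. N + Suc t"])
      (auto simp: Suc_diff_Suc)
  finally show ?thesis .
qed

lemma powr_quotient_le:
  fixes a b D e :: real
  assumes a: "0 \<le> a" and D: "1 \<le> D" "D \<le> b + 2" and e: "0 \<le> e" "e \<le> 1"
  shows "((a + 2) / (b + 2)) powr e \<le> (a + 2) * D powr (- e)"
proof -
  have "(a + 2) powr e \<le> (a + 2) powr 1"
    using a e by (intro powr_mono) auto
  moreover have "D powr e \<le> (b + 2) powr e"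
    using D e by (intro powr_mono2) auto
  ultimately have "(a + 2) powr e / (b + 2) powr e \<le> (a + 2) / D powr e"
    using a D by (intro frac_le) auto
  moreover have "((a + 2) / (b + 2)) powr e = (a + 2) powr e / (b + 2) powr e"
    by (rule powr_divide)
  ultimately show ?thesis by (simp add: powr_minus divide_inverse)
qed

text \<open>With s = 1/(4p): the growth factor (a+t)^s of a block at distance t beyond
  position a is beaten by the decay d^(-1/p), and what remains is summable in t and
  small in a.\<close>

lemma block_decay_bound:
  fixes a t d :: real and p :: nat
  defines "s \<equiv> 1 / (4 * real p)"
  assumes p: "1 \<le> p" and a: "1 \<le> a" and t: "1 \<le> t" and d: "t * (a + t) ^ p \<le> d"
  shows "(a + t) powr s * d powr (- (1 / real p)) \<le> 2 * a powr (- s) * t powr (-1 - s)"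
proof -
  have s: "0 < s" "s \<le> 1" "1 / real p = 4 * s" using p by (auto simp: s_def)
  have "a powr (1/2) * t powr (real p - 1/2) \<le> (a + t) powr (1/2) * (a + t) powr (real p - 1/2)"
    using a t p by (intro mult_mono powr_mono2) auto
  also have "\<dots> = (a + t) ^ p"
    using a t by (simp add: powr_add[symmetric] powr_realpow)
  finally have "t * (a powr (1/2) * t powr (real p - 1/2)) \<le> d"
    using d t by (meson mult_left_mono order_trans zero_le_one)
  moreover have "t * (a powr (1/2) * t powr (real p - 1/2)) = a powr (1/2) * t powr (real p + 1/2)"
    using t by (simp add: powr_add algebra_simps powr_mult_base)
  ultimately have "d powr (- (1 / real p))
      \<le> (a powr (1/2) * t powr (real p + 1/2)) powr (- (1 / real p))"
    using a t by (intro powr_mono2') auto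
  also have "\<dots> = a powr (- (1 / (2 * real p))) * t powr (- ((real p + 1/2) / real p))"
    using a t by (simp add: powr_mult powr_powr)
  also have "\<dots> = a powr (- (2 * s)) * t powr (- (1 + 2 * s))"
    using p by (simp add: s_def field_simps)
  finally have decay: "d powr (- (1 / real p)) \<le> a powr (- (2 * s)) * t powr (- (1 + 2 * s))" .
  have "a + t \<le> 2 * a * t"
    using mult_mono[OF a t] mult_nonneg_nonneg[of "a - 1" "t - 1"] a t by (simp add: algebra_simps)
  hence "(a + t) powr s \<le> (2 * a * t) powr s" using a t s by (intro powr_mono2) auto
  also have "\<dots> \<le> 2 * a powr s * t powr s"
    using s powr_mono[of s 1 2] a t by (simp add: powr_mult mult_right_mono)
  finally have growth: "(a + t) powr s \<le> 2 * a powr s * t powr s" .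
  have "(a + t) powr s * d powr (- (1 / real p))
      \<le> (2 * a powr s * t powr s) * (a powr (- (2 * s)) * t powr (- (1 + 2 * s)))"
    by (intro mult_mono growth decay) auto
  also have "\<dots> = 2 * (a powr s * a powr (- (2 * s))) * (t powr s * t powr (- (1 + 2 * s)))"
    by (simp add: algebra_simps)
  also have "\<dots> = 2 * a powr (- s) * t powr (-1 - s)"
    by (simp add: powr_add[symmetric] add.commute)
  finally show ?thesis .
qed

section \<open>The shift with weights ((k + 2) / (k + 1))^(1/(2p))\<close>

locale telescoping_weights =
  fixes p :: nat and w :: "nat \<Rightarrow> real"
  assumes p_ge_1: "1 \<le> p"
    and w_eq: "\<And>k. w k = ((real k + 2) / (real k + 1)) powr (1 / (2 * real p))"
begin

definition W :: "nat \<Rightarrow> real" where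
  "W n = ((real n + 2) / 2) powr (1 / (2 * real p))"

lemma W_pos: "W n > 0"
  unfolding W_def by simp

lemma W_quotient: "W a / W b = ((real a + 2) / (real b + 2)) powr (1 / (2 * real p))"
proof -
  have "(real a + 2) / (real b + 2) = ((real a + 2) / 2) / ((real b + 2) / 2)"
    by (simp add: field_simps)
  thus ?thesis unfolding W_def by (simp only: powr_divide)
qed

lemma W_quotient_sq: "(W a / W b)\<^sup>2 = ((real a + 2) / (real b + 2)) powr (1 / real p)"
  by (simp add: W_quotient power2_eq_square powr_add[symmetric])

lemma bshift_iterate: "(bshift w ^^ n) x m = W (m + n) / W m * x (m + n)"
proof (rule bshift_iterate_ratio)
  show "w (Suc m) = W (Suc m) / W m" for m
    using w_eq[of "Suc m"] W_quotient[of "Suc m" m] by (simp add: add.commute)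
qed (use W_pos in \<open>simp add: less_imp_neq[symmetric]\<close>)

lemma abs_w_le_2: "\<bar>w k\<bar> \<le> 2"
proof -
  have q: "1 \<le> (real k + 2) / (real k + 1)" "(real k + 2) / (real k + 1) \<le> 2"
    by (simp_all add: field_simps)
  have "((real k + 2) / (real k + 1)) powr (1 / (2 * real p))
      \<le> ((real k + 2) / (real k + 1)) powr 1"
    using q p_ge_1 by (intro powr_mono) auto
  thus ?thesis using q w_eq[of k] by simp
qed

lemma iterate_in_l2: "x \<in> l2 \<Longrightarrow> (bshift w ^^ n) x \<in> l2"
  by (rule bshift_iterate_in_l2[OF abs_w_le_2])

subsection \<open>Failure of p-frequent hypercyclicity\<close>

lemma W_quotient_sq_le:
  assumes "n \<le> M ^ p" and "1 \<le> M"
  shows "(W n / W 0)\<^sup>2 \<le> 3 * real M"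
proof -
  have "real n + 2 \<le> (3 * real M) ^ p"
  proof -
    have "real n \<le> real M ^ p" "1 \<le> real M ^ p"
      using assms by (simp_all add: of_nat_le_iff[of n "M ^ p", symmetric])
    hence "real n + 2 \<le> 3 * real M ^ p" by linarith
    also have "\<dots> \<le> 3 ^ p * real M ^ p"
      using p_ge_1 by (intro mult_right_mono) (auto simp: self_le_power)
    finally show ?thesis by (simp add: power_mult_distrib)
  qed
  have "(W n / W 0)\<^sup>2 = ((real n + 2) / 2) powr (1 / real p)"
    using W_quotient_sq[of n 0] by simp
  also have "\<dots> \<le> ((3 * real M) ^ p) powr (1 / real p)"
    using \<open>real n + 2 \<le> (3 * real M) ^ p\<close> by (intro powr_mono2) auto
  also have "((3 * real M) ^ p) powr (1 / real p) = ((3 * real M) powr real p) powr (1 / real p)"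
    using assms by (simp add: powr_realpow)
  also have "\<dots> = 3 * real M"
    using assms p_ge_1 by (simp add: powr_powr)
  finally show ?thesis .
qed

lemma coordinate_lower_bound:
  assumes near: "\<bar>(bshift w ^^ n) x 0 - 1\<bar> < 1/2" and "n \<le> M ^ p" and "1 \<le> M"
  shows "1 / (12 * real M) \<le> (x n)\<^sup>2"
proof -
  have "\<bar>W n / W 0 * x n - 1\<bar> < 1/2" using near by (simp only: bshift_iterate add_0)
  hence "1/2 < \<bar>W n / W 0 * x n\<bar>" by linarith
  hence "(1/2)\<^sup>2 < \<bar>W n / W 0 * x n\<bar>\<^sup>2" by (rule power_strict_mono) auto
  also have "\<dots> = (W n / W 0)\<^sup>2 * (x n)\<^sup>2" by (simp only: power2_abs power_mult_distrib)
  also have "\<dots> \<le> 3 * real M * (x n)\<^sup>2"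
    using W_quotient_sq_le[OF assms(2,3)] by (intro mult_right_mono) auto
  finally show ?thesis using assms(3) by (simp add: field_simps power2_eq_square)
qed

theorem not_p_frequently_hypercyclic: "\<not> q_freq_hypercyclic_l2 p (bshift w)"
proof
  assume "q_freq_hypercyclic_l2 p (bshift w)"
  moreover have "(\<lambda>n. if n = 0 then 1 else 0) \<in> {v \<in> l2. \<bar>v 0 - 1\<bar> < 1/2}"
    by (simp add: l2I_finite_support[of 1])
  ultimately obtain x where x: "x \<in> l2"
    and dens: "q_lower_dens p {n. (bshift w ^^ n) x \<in> {v \<in> l2. \<bar>v 0 - 1\<bar> < 1/2}} > 0"
    unfolding q_freq_hypercyclic_l2_def using l2_open_coordinate_ball[of 0 1 "1/2"] by blast
  define A where "A = {n. (bshift w ^^ n) x \<in> {v \<in> l2. \<bar>v 0 - 1\<bar> < 1/2}}"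
  have inf: "infinite A"
    using infinite_if_q_lower_dens_pos dens unfolding A_def by blast
  obtain D M where D: "D > 0" and enum: "\<And>k. enumerate A k \<le> M k ^ p"
    and M1: "\<And>k. 1 \<le> M k" and MD: "\<And>k. real (M k) \<le> D * real (Suc k)"
    using enumerate_bound_if_q_lower_dens_pos dens unfolding A_def[symmetric] by metis
  have lower: "1 / (12 * D) / real (Suc k) \<le> (x (enumerate A k))\<^sup>2" for k
  proof -
    have "1 / (12 * D) / real (Suc k) \<le> 1 / (12 * real (M k))"
      using MD[of k] M1[of k] D by (simp add: field_simps)
    also have "\<dots> \<le> (x (enumerate A k))\<^sup>2"
      using enumerate_in_set[OF inf, of k] enum M1
      by (intro coordinate_lower_bound) (auto simp: A_def)
    finally show ?thesis .
  qed
  have "summable (\<lambda>n. (x n)\<^sup>2)" using x by (simp add: l2_def)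
  hence "summable (\<lambda>k. (x (enumerate A k))\<^sup>2)"
    by (rule summable_comp_inj_nonneg[OF _ _ inj_enumerate[OF inf]]) simp
  hence "summable (\<lambda>k. 1 / (12 * D) / real (Suc k))"
    by (rule summable_comparison_test'[where N=0]) (use D lower in simp)
  hence "summable (\<lambda>k. 12 * D * (1 / (12 * D) / real (Suc k)))" by (rule summable_mult)
  hence "summable (\<lambda>k. inverse (real (Suc k)))" using D by (simp add: inverse_eq_divide)
  thus False using not_summable_harmonic[where 'a=real] summable_Suc_iff by blast
qed

subsection \<open>A q-frequently hypercyclic vector for q > p\<close>

definition sigma :: real where
  "sigma = 1 / (4 * real p)"

text \<open>The j-th target is a finitely supported rational sequence together with a precision
  index; via from_nat every such pair occurs.\<close>

definition target_list :: "nat \<Rightarrow> rat list" where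
  "target_list j = fst (from_nat j :: rat list \<times> nat)"

definition precision :: "nat \<Rightarrow> nat" where
  "precision j = snd (from_nat j :: rat list \<times> nat)"

definition target :: "nat \<Rightarrow> nat \<Rightarrow> real" where
  "target j i = (if i < length (target_list j) then of_rat (target_list j ! i) else 0)"

definition target_mass :: "nat \<Rightarrow> real" where
  "target_mass j = (\<Sum>i<length (target_list j). (target j i)\<^sup>2 * (real i + 2))"

definition zeta :: real where
  "zeta = (\<Sum>t. real (Suc t) powr (-1 - sigma))"

text \<open>Only large N carry a block: the length condition keeps blocks disjoint, the mass
  condition bounds what the block contributes to earlier orbit points, and the last condition
  pushes the sum of these contributions below the requested precision.\<close>

definition active :: "nat \<Rightarrow> bool" where
  "active N \<longleftrightarrow> 1 \<le> N \<and> length (target_list (dyadic_index N)) \<le> N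
     \<and> target_mass (dyadic_index N) \<le> real N powr sigma
     \<and> 2 * zeta * (real (precision (dyadic_index N)) + 1)\<^sup>2 < real N powr sigma"

text \<open>Block N occupies the positions N^(p+1) + i with i below the length of its target,
  which is at most N; hence distinct blocks are disjoint.  The entries are the target values
  divided by the weight products, so that the shift by N^(p+1) lands exactly on the target.\<close>

definition in_block :: "nat \<Rightarrow> nat \<Rightarrow> nat \<Rightarrow> bool" where
  "in_block k N i \<longleftrightarrow> active N \<and> i < length (target_list (dyadic_index N)) \<and> k = N ^ Suc p + i"

definition hc_vector :: "nat \<Rightarrow> real" where
  "hc_vector k = (if \<exists>N i. in_block k N i
     then (case SOME t. in_block k (fst t) (snd t) of
             (N, i) \<Rightarrow> target (dyadic_index N) i * W i / W k)
     else 0)"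

lemma sigma_pos: "0 < sigma"
  using p_ge_1 by (simp add: sigma_def)

lemma summable_zeta: "summable (\<lambda>t. real (Suc t) powr (-1 - sigma))"
  using summable_real_powr_iff[of "-1 - sigma"] sigma_pos
    summable_Suc_iff[of "\<lambda>t. real t powr (-1 - sigma)"]
  by simp

lemma sum_le_zeta: "(\<Sum>t<B. real (Suc t) powr (-1 - sigma)) \<le> zeta"
  unfolding zeta_def by (rule sum_le_suminf[OF summable_zeta]) auto

lemma in_block_unique:
  assumes "in_block k N i" and "in_block k N' i'"
  shows "N = N' \<and> i = i'"
proof -
  have k: "k = N ^ Suc p + i" "k = N' ^ Suc p + i'" and "i < N" "i' < N'"
    using assms unfolding in_block_def active_def by auto
  moreover have "2 \<le> Suc p" using p_ge_1 by simp
  ultimately have "\<not> N < N'" "\<not> N' < N"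
    using power_add_less_power[of N N' "Suc p"] power_add_less_power[of N' N "Suc p"] by auto
  thus ?thesis using k by auto
qed

lemma in_block_le: "in_block k N i \<Longrightarrow> N \<le> k"
  unfolding in_block_def active_def by (simp add: trans_le_add1 self_le_power)

lemma in_block_after:
  assumes N: "active N" and i: "length (target_list (dyadic_index N)) \<le> i"
    and b: "in_block (N ^ Suc p + i) N' i'"
  shows "N < N'"
proof (rule ccontr)
  have k: "N ^ Suc p + i = N' ^ Suc p + i'"
    and i': "i' < length (target_list (dyadic_index N'))" "i' < N'"
    using b unfolding in_block_def active_def by auto
  assume "\<not> N < N'"
  then consider "N' < N" | "N' = N" by linarith
  thus False
  proof cases
    case 1
    have "N' ^ Suc p + N' < N ^ Suc p" using power_add_less_power[OF 1, of "Suc p"] p_ge_1 by simp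
    thus False using k i'(2) by linarith
  next
    case 2
    thus False using k i i'(1) by simp
  qed
qed

lemma hc_vector_in_block:
  assumes "in_block k N i"
  shows "hc_vector k = target (dyadic_index N) i * W i / W k"
proof -
  have "in_block k (fst (N, i)) (snd (N, i))" using assms by simp
  hence "(SOME t. in_block k (fst t) (snd t)) = (N, i)"
    using in_block_unique[OF assms] by (metis (mono_tags, lifting) prod.collapse someI)
  thus ?thesis unfolding hc_vector_def using assms by auto
qed

lemma hc_vector_eq_0: "\<not> (\<exists>N i. in_block k N i) \<Longrightarrow> hc_vector k = 0"
  unfolding hc_vector_def by (simp only: if_False)

text \<open>An entry of block N', seen at coordinate i after n shifts (n below the block start),
  is damped by the weights since i + 2 \<ge> N'^(p+1) - n.\<close>

lemma shifted_hc_vector_sq_le: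
  assumes b: "in_block (n + i) N' i'" and n: "n < N' ^ Suc p"
  shows "((bshift w ^^ n) hc_vector i)\<^sup>2
    \<le> (target (dyadic_index N') i')\<^sup>2 * (real i' + 2) * real (N' ^ Suc p - n) powr (- (1 / real p))"
proof -
  have k: "n + i = N' ^ Suc p + i'" using b unfolding in_block_def by simp
  have "(bshift w ^^ n) hc_vector i = target (dyadic_index N') i' * (W i' / W i)"
    using hc_vector_in_block[OF b] W_pos[of i] W_pos[of "n + i"]
    by (simp add: bshift_iterate add.commute field_simps)
  hence "((bshift w ^^ n) hc_vector i)\<^sup>2
      = (target (dyadic_index N') i')\<^sup>2 * ((real i' + 2) / (real i + 2)) powr (1 / real p)"
    by (simp only: power_mult_distrib W_quotient_sq)
  also have "\<dots> \<le> (target (dyadic_index N') i')\<^sup>2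
      * ((real i' + 2) * real (N' ^ Suc p - n) powr (- (1 / real p)))"
  proof (intro mult_left_mono powr_quotient_le)
    have "real (N' ^ Suc p - n) = real (N' ^ Suc p) - real n" using n by (simp add: of_nat_diff)
    moreover have "real n + real i = real (N' ^ Suc p) + real i'"
      using arg_cong[OF k, of real] by simp
    moreover have "real n + 1 \<le> real (N' ^ Suc p)" using n by linarith
    ultimately show "1 \<le> real (N' ^ Suc p - n)" "real (N' ^ Suc p - n) \<le> real i + 2" by linarith+
  qed (use p_ge_1 in auto)
  finally show ?thesis by (simp add: mult.assoc)
qed

text \<open>Every nonzero coordinate of the window is an entry of exactly one block; the sum is
  regrouped by blocks.\<close>

lemma sum_shifted_hc_vector_le:
  assumes F: "F \<subseteq> {..<I}"
    and beyond: "\<And>i N' i'. i \<in> F \<Longrightarrow> in_block (n + i) N' i' \<Longrightarrow> n < N' ^ Suc p"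
  shows "(\<Sum>i\<in>F. ((bshift w ^^ n) hc_vector i)\<^sup>2)
    \<le> (\<Sum>N'\<in>{N'. N' \<le> n + I \<and> active N' \<and> n < N' ^ Suc p}.
          target_mass (dyadic_index N') * real (N' ^ Suc p - n) powr (- (1 / real p)))"
proof -
  define G where "G = {N'. N' \<le> n + I \<and> active N' \<and> n < N' ^ Suc p}"
  define T where "T = Sigma G (\<lambda>N'. {..<length (target_list (dyadic_index N'))})"
  define g where "g = (\<lambda>(N', i'). (target (dyadic_index N') i')\<^sup>2 * (real i' + 2)
                                  * real (N' ^ Suc p - n) powr (- (1 / real p)))"
  define F' where "F' = {i\<in>F. hc_vector (n + i) \<noteq> 0}"
  have finF: "finite F" using F finite_subset by blast
  have finG: "finite G" unfolding G_def by (rule finite_subset[of _ "{..n + I}"]) auto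
  have "(\<Sum>i\<in>F. ((bshift w ^^ n) hc_vector i)\<^sup>2) = (\<Sum>i\<in>F'. ((bshift w ^^ n) hc_vector i)\<^sup>2)"
    by (rule sum.mono_neutral_right[OF finF]) (auto simp: F'_def bshift_iterate add.commute)
  also have "\<dots> \<le> (\<Sum>t\<in>T. g t)"
  proof (rule sum_le_included[where i="\<lambda>(N', i'). N' ^ Suc p + i' - n"])
    show "finite F'" using finF unfolding F'_def by auto
    show "finite T" unfolding T_def using finG by auto
    show "\<forall>t\<in>T. 0 \<le> g t" unfolding g_def by auto
    show "\<forall>i\<in>F'. \<exists>t\<in>T. (case t of (N', i') \<Rightarrow> N' ^ Suc p + i' - n) = i
                         \<and> ((bshift w ^^ n) hc_vector i)\<^sup>2 \<le> g t"
    proof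
      fix i assume "i \<in> F'"
      then obtain N' i' where b: "in_block (n + i) N' i'" and iF: "i \<in> F"
        using hc_vector_eq_0 unfolding F'_def by blast
      have k: "n + i = N' ^ Suc p + i'"
        and "active N'" "i' < length (target_list (dyadic_index N'))"
        using b unfolding in_block_def by auto
      moreover have "N' \<le> n + I" using in_block_le[OF b] iF F by auto
      ultimately have "(N', i') \<in> T" using beyond[OF iF b] unfolding T_def G_def by auto
      moreover have "((bshift w ^^ n) hc_vector i)\<^sup>2 \<le> g (N', i')"
        unfolding g_def using shifted_hc_vector_sq_le[OF b beyond[OF iF b]] by simp
      ultimately show "\<exists>t\<in>T. (case t of (N', i') \<Rightarrow> N' ^ Suc p + i' - n) = i
                         \<and> ((bshift w ^^ n) hc_vector i)\<^sup>2 \<le> g t"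
        using k by force
    qed
  qed
  also have "(\<Sum>t\<in>T. g t) = (\<Sum>N'\<in>G. \<Sum>i'<length (target_list (dyadic_index N')).
        (target (dyadic_index N') i')\<^sup>2 * (real i' + 2)
        * real (N' ^ Suc p - n) powr (- (1 / real p)))"
    unfolding T_def g_def by (rule sum.Sigma[symmetric]) (use finG in auto)
  also have "\<dots> = (\<Sum>N'\<in>G.
      target_mass (dyadic_index N') * real (N' ^ Suc p - n) powr (- (1 / real p)))"
    unfolding target_mass_def by (simp add: sum_distrib_right)
  finally show ?thesis unfolding G_def .
qed

lemma block_weight_le_origin:
  assumes "active N"
  shows "target_mass (dyadic_index N) * real (N ^ Suc p) powr (- (1 / real p))
    \<le> real N powr (-1 - sigma)"
proof -
  have N: "1 \<le> real N" and C: "target_mass (dyadic_index N) \<le> real N powr sigma"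
    using assms unfolding active_def by auto
  have "real (N ^ Suc p) = real N powr real (Suc p)"
    using N by (subst powr_realpow) simp_all
  hence "real (N ^ Suc p) powr (- (1 / real p)) = real N powr (real (Suc p) * - (1 / real p))"
    by (simp add: powr_powr)
  also have "real (Suc p) * - (1 / real p) = - (1 + 4 * sigma)"
    using p_ge_1 by (simp add: sigma_def field_simps)
  finally have "real (N ^ Suc p) powr (- (1 / real p)) = real N powr (- (1 + 4 * sigma))" .
  hence "target_mass (dyadic_index N) * real (N ^ Suc p) powr (- (1 / real p))
      \<le> real N powr sigma * real N powr (- (1 + 4 * sigma))"
    using C by (simp add: mult_right_mono)
  also have "\<dots> = real N powr (-1 - 3 * sigma)"
    by (simp add: powr_add[symmetric] algebra_simps)
  also have "\<dots> \<le> real N powr (-1 - sigma)"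
    using N sigma_pos by (intro powr_mono) auto
  finally show ?thesis .
qed

lemma block_weight_le:
  assumes "active N'" and N: "1 \<le> N" "N < N'"
  shows "target_mass (dyadic_index N') * real (N' ^ Suc p - N ^ Suc p) powr (- (1 / real p))
    \<le> 2 * real N powr (- sigma) * real (N' - N) powr (-1 - sigma)"
proof -
  have "(N' - N) * N' ^ p \<le> N' ^ Suc p - N ^ Suc p"
    using N power_mono[of N N' p] by (simp add: diff_mult_distrib diff_le_mono2)
  hence d: "real (N' - N) * (real N + real (N' - N)) ^ p \<le> real (N' ^ Suc p - N ^ Suc p)"
    using N
    by (metis le_add_diff_inverse less_imp_le of_nat_add of_nat_le_iff of_nat_mult of_nat_power)
  have "target_mass (dyadic_index N') * real (N' ^ Suc p - N ^ Suc p) powr (- (1 / real p))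
      \<le> real N' powr sigma * real (N' ^ Suc p - N ^ Suc p) powr (- (1 / real p))"
    using \<open>active N'\<close> unfolding active_def by (intro mult_right_mono) auto
  also have "\<dots> = (real N + real (N' - N)) powr sigma
      * real (N' ^ Suc p - N ^ Suc p) powr (- (1 / real p))"
    using N by (simp add: of_nat_diff)
  also have "\<dots> \<le> 2 * real N powr (- sigma) * real (N' - N) powr (-1 - sigma)"
    unfolding sigma_def using p_ge_1 N d by (intro block_decay_bound) auto
  finally show ?thesis .
qed

lemma hc_vector_in_l2: "hc_vector \<in> l2"
proof -
  have "(\<Sum>k<I. (hc_vector k)\<^sup>2) \<le> zeta" for I
  proof -
    define G where "G = {N. N \<le> 0 + I \<and> active N \<and> 0 < N ^ Suc p}"
    have "(\<Sum>k<I. (hc_vector k)\<^sup>2) = (\<Sum>i\<in>{..<I}. ((bshift w ^^ 0) hc_vector i)\<^sup>2)"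
      by simp
    also have "\<dots> \<le> (\<Sum>N\<in>G.
        target_mass (dyadic_index N) * real (N ^ Suc p - 0) powr (- (1 / real p)))"
      unfolding G_def by (rule sum_shifted_hc_vector_le) (auto simp: in_block_def active_def)
    also have "\<dots> \<le> (\<Sum>N\<in>G. real (N - 0) powr (-1 - sigma))"
      using block_weight_le_origin by (intro sum_mono) (simp add: G_def)
    also have "\<dots> \<le> (\<Sum>t<I. real (Suc t) powr (-1 - sigma))"
      by (rule sum_shift_le_sum_lessThan) (auto simp: G_def active_def)
    also have "\<dots> \<le> zeta" by (rule sum_le_zeta)
    finally show ?thesis .
  qed
  thus ?thesis unfolding l2_def mem_Collect_eq by (rule summableI_nonneg_bounded[rotated]) simp
qed

lemma target_in_l2: "target j \<in> l2"
  by (rule l2I_finite_support[of "length (target_list j)"]) (simp add: target_def)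

lemma shifted_hc_vector_on_block:
  assumes "active N" and "i < length (target_list (dyadic_index N))"
  shows "(bshift w ^^ (N ^ Suc p)) hc_vector i = target (dyadic_index N) i"
proof -
  have "in_block (N ^ Suc p + i) N i" using assms unfolding in_block_def by simp
  thus ?thesis
    using hc_vector_in_block W_pos[of i] W_pos[of "N ^ Suc p + i"]
    by (simp add: bshift_iterate add.commute)
qed

lemma shifted_hc_vector_tail_le:
  assumes N: "active N"
  shows "(\<Sum>i\<in>{i. i < I \<and> length (target_list (dyadic_index N)) \<le> i}.
            ((bshift w ^^ (N ^ Suc p)) hc_vector i)\<^sup>2) \<le> 2 * real N powr (- sigma) * zeta"
proof -
  define n where "n = N ^ Suc p"
  define G where "G = {N'. N' \<le> n + I \<and> active N' \<and> n < N' ^ Suc p}"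
  have N1: "1 \<le> N" using N unfolding active_def by simp
  have beyond_N: "N < N'" if "n < N' ^ Suc p" for N'
    using that unfolding n_def by (metis not_less power_mono zero_le)
  have beyond: "n < N' ^ Suc p"
    if "i \<in> {i. i < I \<and> length (target_list (dyadic_index N)) \<le> i}" and "in_block (n + i) N' i'"
    for i N' i'
  proof -
    have "N < N'" using in_block_after[OF N, of i N' i'] that unfolding n_def by simp
    thus ?thesis unfolding n_def by (intro power_strict_mono) auto
  qed
  have "(\<Sum>i\<in>{i. i < I \<and> length (target_list (dyadic_index N)) \<le> i}. ((bshift w ^^ n) hc_vector i)\<^sup>2)
      \<le> (\<Sum>N'\<in>G. target_mass (dyadic_index N') * real (N' ^ Suc p - n) powr (- (1 / real p)))"
    unfolding G_def by (rule sum_shifted_hc_vector_le[OF _ beyond]) auto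
  also have "\<dots> \<le> (\<Sum>N'\<in>G. 2 * real N powr (- sigma) * real (N' - N) powr (-1 - sigma))"
  proof (rule sum_mono)
    fix N' assume "N' \<in> G"
    hence "active N'" "N < N'" using beyond_N unfolding G_def by auto
    thus "target_mass (dyadic_index N') * real (N' ^ Suc p - n) powr (- (1 / real p))
        \<le> 2 * real N powr (- sigma) * real (N' - N) powr (-1 - sigma)"
      unfolding n_def using block_weight_le N1 by blast
  qed
  also have "\<dots> = 2 * real N powr (- sigma) * (\<Sum>N'\<in>G. real (N' - N) powr (-1 - sigma))"
    by (simp add: sum_distrib_left)
  also have "(\<Sum>N'\<in>G. real (N' - N) powr (-1 - sigma)) \<le> (\<Sum>t<n + I. real (Suc t) powr (-1 - sigma))"
    using beyond_N by (intro sum_shift_le_sum_lessThan) (auto simp: G_def)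
  also have "\<dots> \<le> zeta" by (rule sum_le_zeta)
  finally show ?thesis unfolding n_def by (simp add: mult_left_mono)
qed

lemma orbit_approximates_target:
  assumes N: "active N"
  shows "l2norm (\<lambda>i. (bshift w ^^ (N ^ Suc p)) hc_vector i - target (dyadic_index N) i)
    < 1 / (real (precision (dyadic_index N)) + 1)"
proof -
  define j where "j = dyadic_index N"
  define D where "D i = ((bshift w ^^ (N ^ Suc p)) hc_vector i - target j i)\<^sup>2" for i
  have "summable D"
    unfolding D_def using l2_summable_diff iterate_in_l2 hc_vector_in_l2 target_in_l2 by blast
  moreover have "(\<Sum>i<I. D i) \<le> 2 * real N powr (- sigma) * zeta" for I
  proof -
    have "(\<Sum>i<I. D i) = (\<Sum>i\<in>{i. i < I \<and> length (target_list j) \<le> i}. D i)"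
      using shifted_hc_vector_on_block[OF N]
      by (intro sum.mono_neutral_right) (auto simp: D_def j_def intro: leI)
    also have "\<dots> = (\<Sum>i\<in>{i. i < I \<and> length (target_list j) \<le> i}.
        ((bshift w ^^ (N ^ Suc p)) hc_vector i)\<^sup>2)"
      by (intro sum.cong) (auto simp: D_def target_def)
    also have "\<dots> \<le> 2 * real N powr (- sigma) * zeta"
      unfolding j_def by (rule shifted_hc_vector_tail_le[OF N])
    finally show ?thesis .
  qed
  ultimately have "suminf D \<le> 2 * real N powr (- sigma) * zeta" by (rule suminf_le_const)
  also have "\<dots> < 1 / (real (precision j) + 1)\<^sup>2"
    using N unfolding active_def j_def by (simp add: powr_minus divide_simps)
  finally have "sqrt (suminf D) < sqrt (1 / (real (precision j) + 1)\<^sup>2)"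
    by (rule real_sqrt_less_mono)
  thus ?thesis unfolding l2norm_def D_def j_def by (simp add: real_sqrt_divide)
qed

lemma eventually_active: "eventually (\<lambda>N. dyadic_index N = j \<longrightarrow> active N) sequentially"
proof -
  have "eventually (\<lambda>N. 1 \<le> N \<and> length (target_list j) \<le> N \<and> target_mass j < real N powr sigma
      \<and> 2 * zeta * (real (precision j) + 1)\<^sup>2 < real N powr sigma) sequentially"
    using sigma_pos by (intro eventually_conj eventually_ge_at_top eventually_less_real_powr)
  thus ?thesis by eventually_elim (auto simp: active_def)
qed

lemma eventually_orbit_in_open:
  assumes U: "l2_open U" "U \<noteq> {}"
  obtains j
  where "eventually (\<lambda>N. dyadic_index N = j \<longrightarrow> (bshift w ^^ (N ^ Suc p)) hc_vector \<in> U)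
           sequentially"
proof -
  obtain z e where z: "z \<in> l2" and e: "e > 0"
    and ball: "\<And>y. y \<in> l2 \<Longrightarrow> l2norm (\<lambda>n. y n - z n) < e \<Longrightarrow> y \<in> U"
    using U unfolding l2_open_def by blast
  obtain ys :: "rat list"
    where ys: "l2norm (\<lambda>n. (if n < length ys then of_rat (ys ! n) else 0) - z n) < e / 2"
    using l2_rat_list_approx[OF z, of "e / 2"] e by auto
  obtain k where k: "inverse (real (Suc k)) < e / 2" using reals_Archimedean[of "e / 2"] e by auto
  define j where "j = to_nat (ys, k)"
  have j: "target_list j = ys" "precision j = k"
    unfolding target_list_def precision_def j_def by simp_all
  have target_close: "l2norm (\<lambda>n. target j n - z n) < e / 2"
    using ys unfolding target_def j(1) .
  have "(bshift w ^^ (N ^ Suc p)) hc_vector \<in> U" if "active N" "dyadic_index N = j" for N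
  proof (rule ball)
    show v: "(bshift w ^^ (N ^ Suc p)) hc_vector \<in> l2"
      by (rule iterate_in_l2[OF hc_vector_in_l2])
    have "l2norm (\<lambda>n. (bshift w ^^ (N ^ Suc p)) hc_vector n - z n)
        \<le> l2norm (\<lambda>n. (bshift w ^^ (N ^ Suc p)) hc_vector n - target j n)
          + l2norm (\<lambda>n. target j n - z n)"
      by (rule l2norm_diff_triangle[OF v target_in_l2 z])
    also have "\<dots> < 1 / (real k + 1) + e / 2"
      using orbit_approximates_target[OF that(1)] target_close that(2) j(2)
      by (intro add_strict_mono) simp_all
    finally show "l2norm (\<lambda>n. (bshift w ^^ (N ^ Suc p)) hc_vector n - z n) < e"
      using k by (simp add: inverse_eq_divide add.commute)
  qed
  hence "eventually (\<lambda>N. dyadic_index N = j \<longrightarrow> (bshift w ^^ (N ^ Suc p)) hc_vector \<in> U) sequentially"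
    using eventually_active[of j] by (auto elim: eventually_mono)
  thus ?thesis by (rule that)
qed

theorem q_frequently_hypercyclic:
  assumes "p + 1 \<le> q"
  shows "q_freq_hypercyclic_l2 q (bshift w)"
  unfolding q_freq_hypercyclic_l2_def
proof (intro bexI[OF _ hc_vector_in_l2] allI impI)
  fix U assume "l2_open U \<and> U \<noteq> {}"
  then obtain j R
    where R: "\<And>N. R \<le> N \<Longrightarrow> dyadic_index N = j \<Longrightarrow> (bshift w ^^ (N ^ Suc p)) hc_vector \<in> U"
    using eventually_orbit_in_open unfolding eventually_sequentially by metis
  show "0 < q_lower_dens q {n. (bshift w ^^ n) hc_vector \<in> U}"
  proof (rule q_lower_dens_pos_if_powers_mem[of "2 ^ Suc j" "2 ^ j" "Suc p" q R])
    show "\<And>N. R \<le> N \<Longrightarrow> N mod 2 ^ Suc j = 2 ^ j \<Longrightarrow> N ^ Suc p \<in> {n. (bshift w ^^ n) hc_vector \<in> U}"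
      using R dyadic_index_eq by blast
  qed (use assms in simp_all)
qed

end

theorem mainTheorem7:
  fixes p :: nat and w :: "nat \<Rightarrow> real"
  assumes "p \<ge> 1"
    and "\<And>k. w k = ((real k + 2) / (real k + 1)) powr (1 / (2 * real p))"
  shows "\<not> q_freq_hypercyclic_l2 p (bshift w) \<and>
         (\<forall>q. q \<ge> p + 1 \<longrightarrow> q_freq_hypercyclic_l2 q (bshift w))"
proof -
  interpret telescoping_weights p w
    using assms by unfold_locales auto
  show ?thesis
    using not_p_frequently_hypercyclic q_frequently_hypercyclic by simp
qed

end
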